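(* Let $u\in R^{\times}$, $a\in R$. For every right $H_N^q$-comodule algebra map $f:T\to\mathcal{B}_{(u,a)}$ there exist unique $\lambda,\mu,\xi\in R$ such that $f(E)=\lambda$, $f(G)=\mu v_g$ and $f(X)=\lambda v_x+\xi v_g$.
   Context: $R$ is a commutative unital ring, $N\ge2$, and $q\in R$ a root of the $N$-th cyclotomic polynomial over $\mathbb{Z}$. $H_N^q$ is the Taft Hopf algebra over $R$: generated by $g,x$ with $g^N=1$, $x^N=0$, $xg=qgx$, $\Delta(g)=g\otimes g$, $\Delta(x)=1\otimes x+x\otimes g$, $\varepsilon(g)=1$, $\varepsilon(x)=0$; it is free over $R$ with basis $\{g^mx^n:0\le m,n<N\}$. For $u\in R^{\times}$, $a\in R$, $\mathcal{B}_{(u,a)}$ is the $R$-algebra generated by $v_g,v_x$ with $v_g^N=u$, $v_x^N=a$, $v_xv_g=qv_gv_x$, free over $R$ with basis $\{v_g^mv_x^n:0\le m,n<N\}$, and a right $H_N^q$-comodule algebra via $\rho(v_g)=v_g\otimes g$, $\rho(v_x)=1\otimes x+v_x\otimes g$. For each $i\ge1$ let $Z_i^H=\{Z_i^h:h\in H_N^q\}$ be a copy of the $R$-module $H_N^q$ and $T=T(\bigoplus_{i\ge1}Z_i^H)$ the tensor algebra, a right $H_N^q$-comodule algebra via $\delta(Z_i^h)=\sum Z_i^{h_1}\otimes h_2$. Set $E=Z_1^1$, $G=Z_1^g$, $X=Z_1^x$, so $\delta(E)=E\otimes1$, $\delta(G)=G\otimes g$, $\delta(X)=E\otimes x+X\otimes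 g$. *)

theory Defs
  imports Complex_Main "HOL-Computational_Algebra.Polynomial" "HOL-Library.Function_Algebras"
begin

definition cyclotomic_poly :: "nat \<Rightarrow> int poly" where
  "cyclotomic_poly N = (THE p. map_poly of_int p =
      (\<Prod>k\<in>{k. k < N \<and> coprime k N}. [:- cis (2 * pi * real k / real N), 1:]))"

(* Free R-modules are modelled as functions "basis \<Rightarrow> R" (coefficient functions). *)
definition supp :: "('b \<Rightarrow> 'a::zero) \<Rightarrow> 'b set" where
  "supp x = {v. x v \<noteq> 0}"

definition ind :: "'b \<Rightarrow> 'b \<Rightarrow> 'a::{zero,one}" where
  "ind w = (\<lambda>v. if v = w then 1 else 0)"

definition sc :: "'a::times \<Rightarrow> ('b \<Rightarrow> 'a) \<Rightarrow> 'b \<Rightarrow> 'a" where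
  "sc c x = (\<lambda>v. c * x v)"

(* elementary tensor s \<otimes> t of free modules, basis = pairs of basis elements *)
definition tens :: "('b \<Rightarrow> 'a::times) \<Rightarrow> ('c \<Rightarrow> 'a) \<Rightarrow> ('b \<times> 'c \<Rightarrow> 'a)" where
  "tens s t = (\<lambda>(v, w). s v * t w)"

definition box :: "nat \<Rightarrow> (nat \<times> nat) set" where
  "box N = {..<N} \<times> {..<N}"

(* The algebra B_(u,a): basis v_g^m v_x^n, (m,n) in box N.
   bmon N u a (m,n) is the element v_g^m v_x^n for arbitrary m, n
   (using v_g^N = u, v_x^N = a). *)
definition bmon :: "nat \<Rightarrow> 'a::comm_ring_1 \<Rightarrow> 'a \<Rightarrow> nat \<times> nat \<Rightarrow> (nat \<times> nat \<Rightarrow> 'a)" where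
  "bmon N u a p = sc (u ^ (fst p div N) * a ^ (snd p div N)) (ind (fst p mod N, snd p mod N))"

(* (v_g^m1 v_x^n1)(v_g^m2 v_x^n2) = q^(n1 m2) v_g^(m1+m2) v_x^(n1+n2) *)
definition Bmul :: "nat \<Rightarrow> 'a::comm_ring_1 \<Rightarrow> 'a \<Rightarrow> 'a \<Rightarrow>
    (nat \<times> nat \<Rightarrow> 'a) \<Rightarrow> (nat \<times> nat \<Rightarrow> 'a) \<Rightarrow> (nat \<times> nat \<Rightarrow> 'a)" where
  "Bmul N q u a x y = (\<Sum>p1\<in>supp x. \<Sum>p2\<in>supp y.
      sc (x p1 * y p2 * q ^ (snd p1 * fst p2)) (bmon N u a (fst p1 + fst p2, snd p1 + snd p2)))"

definition Bone :: "nat \<times> nat \<Rightarrow> 'a::comm_ring_1" where "Bone = ind (0, 0)"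
definition Bvg :: "nat \<times> nat \<Rightarrow> 'a::comm_ring_1" where "Bvg = ind (1, 0)"
definition Bvx :: "nat \<times> nat \<Rightarrow> 'a::comm_ring_1" where "Bvx = ind (0, 1)"

definition carrB :: "nat \<Rightarrow> (nat \<times> nat \<Rightarrow> 'a::zero) set" where
  "carrB N = {x. supp x \<subseteq> box N}"

(* The Taft algebra H_N^q = B_(1,0) as an algebra (basis g^m x^n); Bone = 1, Bvg = g, Bvx = x. *)
definition Hmul :: "nat \<Rightarrow> 'a::comm_ring_1 \<Rightarrow>
    (nat \<times> nat \<Rightarrow> 'a) \<Rightarrow> (nat \<times> nat \<Rightarrow> 'a) \<Rightarrow> (nat \<times> nat \<Rightarrow> 'a)" where
  "Hmul N q = Bmul N q 1 0"

definition BHmul :: "nat \<Rightarrow> 'a::comm_ring_1 \<Rightarrow> 'a \<Rightarrow> 'a \<Rightarrow>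
    ((nat \<times> nat) \<times> (nat \<times> nat) \<Rightarrow> 'a) \<Rightarrow> ((nat \<times> nat) \<times> (nat \<times> nat) \<Rightarrow> 'a) \<Rightarrow>
    ((nat \<times> nat) \<times> (nat \<times> nat) \<Rightarrow> 'a)" where
  "BHmul N q u a z z' = (\<Sum>pr1\<in>supp z. \<Sum>pr2\<in>supp z'.
      sc (z pr1 * z' pr2) (tens (Bmul N q u a (ind (fst pr1)) (ind (fst pr2)))
                                (Hmul N q (ind (snd pr1)) (ind (snd pr2)))))"

definition BHone :: "(nat \<times> nat) \<times> (nat \<times> nat) \<Rightarrow> 'a::comm_ring_1" where
  "BHone = tens Bone Bone"

definition pw :: "('b \<Rightarrow> 'b \<Rightarrow> 'b) \<Rightarrow> 'b \<Rightarrow> 'b \<Rightarrow> nat \<Rightarrow> 'b" where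
  "pw mul one z k = ((\<lambda>y. mul y z) ^^ k) one"

definition rho_basis :: "nat \<Rightarrow> 'a::comm_ring_1 \<Rightarrow> 'a \<Rightarrow> 'a \<Rightarrow> nat \<times> nat \<Rightarrow>
    ((nat \<times> nat) \<times> (nat \<times> nat) \<Rightarrow> 'a)" where
  "rho_basis N q u a p = BHmul N q u a
      (pw (BHmul N q u a) BHone (tens Bvg Bvg) (fst p))
      (pw (BHmul N q u a) BHone (tens Bone Bvx + tens Bvx Bvg) (snd p))"

definition rho :: "nat \<Rightarrow> 'a::comm_ring_1 \<Rightarrow> 'a \<Rightarrow> 'a \<Rightarrow> (nat \<times> nat \<Rightarrow> 'a) \<Rightarrow>
    ((nat \<times> nat) \<times> (nat \<times> nat) \<Rightarrow> 'a)" where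
  "rho N q u a x = (\<Sum>p\<in>supp x. sc (x p) (rho_basis N q u a p))"

(* comultiplication of H: Delta(g) = g \<otimes> g, Delta(x) = 1 \<otimes> x + x \<otimes> g *)
definition Delta :: "nat \<Rightarrow> 'a::comm_ring_1 \<Rightarrow> (nat \<times> nat \<Rightarrow> 'a) \<Rightarrow>
    ((nat \<times> nat) \<times> (nat \<times> nat) \<Rightarrow> 'a)" where
  "Delta N q = rho N q 1 0"

(* The tensor algebra T = T(\<oplus>_{i\<ge>1} Z_i^H): free algebra on the letters (i,(m,n)),
   the letter (i,(m,n)) standing for Z_i^{g^m x^n}; basis = words. *)
type_synonym letter = "nat \<times> (nat \<times> nat)"

definition carrT :: "nat \<Rightarrow> (letter list \<Rightarrow> 'a::zero) set" where
  "carrT N = {x. finite (supp x) \<and>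
      (\<forall>w\<in>supp x. \<forall>l\<in>set w. 1 \<le> fst l \<and> snd l \<in> box N)}"

definition Tmul :: "(letter list \<Rightarrow> 'a::comm_ring_1) \<Rightarrow> (letter list \<Rightarrow> 'a) \<Rightarrow> (letter list \<Rightarrow> 'a)" where
  "Tmul x y = (\<Sum>w1\<in>supp x. \<Sum>w2\<in>supp y. sc (x w1 * y w2) (ind (w1 @ w2)))"

definition Tone :: "letter list \<Rightarrow> 'a::comm_ring_1" where
  "Tone = ind []"

definition Z :: "nat \<Rightarrow> nat \<Rightarrow> (nat \<times> nat \<Rightarrow> 'a::comm_ring_1) \<Rightarrow> (letter list \<Rightarrow> 'a)" where
  "Z N i h = (\<Sum>p\<in>box N. sc (h p) (ind [(i, p)]))"

definition THmul :: "nat \<Rightarrow> 'a::comm_ring_1 \<Rightarrow>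
    (letter list \<times> (nat \<times> nat) \<Rightarrow> 'a) \<Rightarrow> (letter list \<times> (nat \<times> nat) \<Rightarrow> 'a) \<Rightarrow>
    (letter list \<times> (nat \<times> nat) \<Rightarrow> 'a)" where
  "THmul N q z z' = (\<Sum>wr1\<in>supp z. \<Sum>wr2\<in>supp z'.
      sc (z wr1 * z' wr2) (tens (ind (fst wr1 @ fst wr2)) (Hmul N q (ind (snd wr1)) (ind (snd wr2)))))"

definition THone :: "letter list \<times> (nat \<times> nat) \<Rightarrow> 'a::comm_ring_1" where
  "THone = tens Tone Bone"

definition delta_letter :: "nat \<Rightarrow> 'a::comm_ring_1 \<Rightarrow> letter \<Rightarrow> (letter list \<times> (nat \<times> nat) \<Rightarrow> 'a)" where
  "delta_letter N q l = (\<Sum>rs\<in>supp (Delta N q (ind (snd l))).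
      sc (Delta N q (ind (snd l)) rs) (tens (ind [(fst l, fst rs)]) (ind (snd rs))))"

definition delta_word :: "nat \<Rightarrow> 'a::comm_ring_1 \<Rightarrow> letter list \<Rightarrow> (letter list \<times> (nat \<times> nat) \<Rightarrow> 'a)" where
  "delta_word N q w = foldr (\<lambda>l acc. THmul N q (delta_letter N q l) acc) w THone"

definition delta :: "nat \<Rightarrow> 'a::comm_ring_1 \<Rightarrow> (letter list \<Rightarrow> 'a) \<Rightarrow> (letter list \<times> (nat \<times> nat) \<Rightarrow> 'a)" where
  "delta N q x = (\<Sum>w\<in>supp x. sc (x w) (delta_word N q w))"

definition ftens :: "((letter list \<Rightarrow> 'a::comm_ring_1) \<Rightarrow> (nat \<times> nat \<Rightarrow> 'a)) \<Rightarrow>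
    (letter list \<times> (nat \<times> nat) \<Rightarrow> 'a) \<Rightarrow> ((nat \<times> nat) \<times> (nat \<times> nat) \<Rightarrow> 'a)" where
  "ftens f z = (\<Sum>wr\<in>supp z. sc (z wr) (tens (f (ind (fst wr))) (ind (snd wr))))"

definition comod_alg_map :: "nat \<Rightarrow> 'a::comm_ring_1 \<Rightarrow> 'a \<Rightarrow> 'a \<Rightarrow>
    ((letter list \<Rightarrow> 'a) \<Rightarrow> (nat \<times> nat \<Rightarrow> 'a)) \<Rightarrow> bool" where
  "comod_alg_map N q u a f \<longleftrightarrow>
     (\<forall>x\<in>carrT N. f x \<in> carrB N) \<and>
     (\<forall>x\<in>carrT N. \<forall>y\<in>carrT N. f (x + y) = f x + f y) \<and>
     (\<forall>c. \<forall>x\<in>carrT N. f (sc c x) = sc c (f x)) \<and>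
     f Tone = Bone \<and>
     (\<forall>x\<in>carrT N. \<forall>y\<in>carrT N. f (Tmul x y) = Bmul N q u a (f x) (f y)) \<and>
     (\<forall>x\<in>carrT N. rho N q u a (f x) = ftens f (delta N q x))"

end

theory Submission
  imports Defs
begin

(* Let e, g, x be the images of E, G, X. Colinearity of f gives rho(e) = e \<otimes> 1,
   rho(g) = g \<otimes> g and rho(x) = e \<otimes> x + x \<otimes> g. Grade B \<otimes> H by the x-degree of the H-factor.
   rho(v_g^m v_x^n) = (v_g \<otimes> g)^m (1 \<otimes> x + v_x \<otimes> g)^n has no component of x-degree above n,
   and its component of x-degree n is v_g^m \<otimes> g^m x^n. So if rho(y) = y \<otimes> g^k, comparing the
   coefficients of v_g^m \<otimes> g^m x^n from the top x-degree downwards shows that y is a multiple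
   of v_g^k. This gives e = \<lambda> and g = \<mu> v_g, and applied to x - \<lambda> v_x it gives
   x = \<lambda> v_x + \<xi> v_g; uniqueness is read off coefficients. *)

lemma sum_fun_apply: "(\<Sum>x\<in>A. F x) v = (\<Sum>x\<in>A. F x v)"
  by (induction A rule: infinite_finite_induct) auto

lemma sc_apply [simp]: "sc c x v = c * x v"
  by (simp add: sc_def)

lemma tens_apply [simp]: "tens s t (v, w) = s v * t w"
  by (simp add: tens_def)

lemma ind_apply: "ind w v = (if v = w then 1 else 0)"
  by (simp add: ind_def)

lemma ind_same [simp]: "ind w w = 1"
  by (simp add: ind_def)

lemma sc_one [simp]: "sc (1::'a::monoid_mult) x = x"
  by (simp add: sc_def)

lemma sc_zero [simp]: "sc (0::'a::mult_zero) x = 0"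
  by (simp add: sc_def fun_eq_iff)

lemma sc_sum_left: "sc (\<Sum>k\<in>K. c k :: 'a::comm_ring_1) x = (\<Sum>k\<in>K. sc (c k) x)"
  by (simp add: fun_eq_iff sum_fun_apply sum_distrib_right)

lemma sc_add_right: "sc c (x + y) = sc c x + sc (c::'a::comm_ring_1) y"
  by (simp add: fun_eq_iff algebra_simps)

lemma tens_sc_left: "tens (sc c s) t = sc (c::'a::comm_ring_1) (tens s t)"
  by (simp add: fun_eq_iff tens_def split_beta)

lemma tens_diff_left: "tens (s - s') t = tens s t - tens s' (t :: _ \<Rightarrow> 'a::comm_ring_1)"
  by (simp add: fun_eq_iff tens_def split_beta algebra_simps)

lemma tens_ind_ind: "tens (ind b) (ind h) = (ind (b, h) :: _ \<Rightarrow> 'a::comm_ring_1)"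
  by (auto simp: fun_eq_iff ind_def)

lemma supp_ind: "supp (ind w) \<subseteq> {w}"
  by (auto simp: supp_def ind_def)

lemma finite_box [simp]: "finite (box N)"
  by (simp add: box_def)

lemma sum_supp_superset:
  assumes "supp z \<subseteq> S" "finite S" "\<And>x. z x = 0 \<Longrightarrow> F x = 0"
  shows "(\<Sum>x\<in>supp z. F x) = (\<Sum>x\<in>S. F x)"
  by (rule sum.mono_neutral_left) (use assms in \<open>auto simp: supp_def\<close>)

lemma supp_sum_sc_ind:
  fixes c :: "'k \<Rightarrow> 'a::comm_ring_1"
  shows "supp (\<Sum>k\<in>K. sc (c k) (ind (w k))) \<subseteq> w ` K"
proof
  fix v assume "v \<in> supp (\<Sum>k\<in>K. sc (c k) (ind (w k)))"
  then have "(\<Sum>k\<in>K. c k * ind (w k) v) \<noteq> 0"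
    by (simp add: supp_def sum_fun_apply)
  then obtain k where "k \<in> K" "c k * ind (w k) v \<noteq> 0"
    by (meson sum.neutral)
  then show "v \<in> w ` K"
    by (auto simp: ind_apply split: if_splits)
qed

lemma sum_sc_ind_eq:
  fixes z :: "'b \<Rightarrow> 'a::comm_ring_1"
  assumes "supp z \<subseteq> S" "finite S"
  shows "(\<Sum>v\<in>S. sc (z v) (ind v)) = z"
proof
  fix v
  have "(\<Sum>w\<in>S. sc (z w) (ind w)) v = (\<Sum>w\<in>S. if w = v then z v else 0)"
    unfolding sum_fun_apply by (intro sum.cong) (auto simp: ind_apply)
  also have "\<dots> = z v"
    using assms by (auto simp: supp_def)
  finally show "(\<Sum>w\<in>S. sc (z w) (ind w)) v = z v" .
qed

lemma bmon_in_box: "(m, n) \<in> box N \<Longrightarrow> bmon N u a (m, n) = ind (m, n)"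
  by (simp add: bmon_def box_def)

lemma Bmul_ind_ind:
  "Bmul N q u a (ind p1) (ind p2) =
     sc (q ^ (snd p1 * fst p2)) (bmon N u a (fst p1 + fst p2, snd p1 + snd p2))"
proof -
  have "Bmul N q u a (ind p1) (ind p2) = (\<Sum>x\<in>{p1}. \<Sum>y\<in>{p2}.
      sc (ind p1 x * ind p2 y * q ^ (snd x * fst y)) (bmon N u a (fst x + fst y, snd x + snd y)))"
    unfolding Bmul_def by (subst sum_supp_superset[OF supp_ind]; simp)+
  then show ?thesis
    by (simp add: ind_apply)
qed

lemma Bmul_ind_ind_in_box:
  "(m1 + m2, n1 + n2) \<in> box N \<Longrightarrow>
     Bmul N q u a (ind (m1, n1)) (ind (m2, n2)) = sc (q ^ (n1 * m2)) (ind (m1 + m2, n1 + n2))"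
  by (simp add: Bmul_ind_ind bmon_in_box)

lemma Hmul_ind_ind_in_box:
  "(m1 + m2, n1 + n2) \<in> box N \<Longrightarrow>
     Hmul N q (ind (m1, n1)) (ind (m2, n2)) = sc (q ^ (n1 * m2)) (ind (m1 + m2, n1 + n2))"
  by (simp add: Hmul_def Bmul_ind_ind_in_box)

(* Since x^N = 0 in H, x-degrees add without reduction mod N. *)
lemma Hmul_ind_ind_nonzero_x_degree:
  assumes "Hmul N q (ind h1) (ind h2) h \<noteq> 0"
  shows "snd h = snd h1 + snd h2"
proof -
  have "(0::'a::comm_ring_1) ^ ((snd h1 + snd h2) div N) \<noteq> 0"
       "snd h = (snd h1 + snd h2) mod N"
    using assms by (auto simp: Hmul_def Bmul_ind_ind bmon_def ind_apply split: if_splits)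
  then show ?thesis
    by (metis div_eq_0_iff mod_less mod_by_0 zero_power power_0 gr0I)
qed

lemma Bmul_outside_box:
  assumes "0 < N" "v \<notin> box N"
  shows "Bmul N q u a x y v = 0"
proof -
  have "bmon N u a p v = 0" for p
    using assms by (auto simp: bmon_def ind_apply box_def)
  then show ?thesis
    by (simp add: Bmul_def sum_fun_apply)
qed

lemma BHmul_eq_sum_tens:
  assumes "supp z \<subseteq> S" "finite S" "supp z' \<subseteq> S'" "finite S'"
  shows "BHmul N q u a z z' = (\<Sum>pr1\<in>S. \<Sum>pr2\<in>S'. sc (z pr1 * z' pr2)
      (tens (Bmul N q u a (ind (fst pr1)) (ind (fst pr2))) (Hmul N q (ind (snd pr1)) (ind (snd pr2)))))"
  unfolding BHmul_def
  by (subst sum_supp_superset[OF assms(1,2)], simp)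
     (intro sum.cong refl sum_supp_superset[OF assms(3,4)], simp)

lemma BHmul_ind_ind:
  "BHmul N q u a (ind (b1, h1)) (ind (b2, h2)) =
     tens (Bmul N q u a (ind b1) (ind b2)) (Hmul N q (ind h1) (ind h2))"
  by (simp add: BHmul_eq_sum_tens[OF supp_ind _ supp_ind])

lemma BHmul_eq_sum:
  assumes "supp z \<subseteq> S" "finite S" "supp z' \<subseteq> S'" "finite S'"
  shows "BHmul N q u a z z' =
    (\<Sum>pr1\<in>S. \<Sum>pr2\<in>S'. sc (z pr1 * z' pr2) (BHmul N q u a (ind pr1) (ind pr2)))"
  unfolding BHmul_eq_sum_tens[OF assms] by (intro sum.cong refl) (metis BHmul_ind_ind prod.collapse)

lemma supp_BHmul:
  assumes "0 < N"
  shows "supp (BHmul N q u a z z') \<subseteq> box N \<times> box N"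
proof (rule subsetI, rule ccontr)
  fix P assume "P \<in> supp (BHmul N q u a z z')" "P \<notin> box N \<times> box N"
  moreover have "tens (Bmul N q u a x y) (Hmul N q x' y') P = 0" for x y x' y'
    using \<open>P \<notin> box N \<times> box N\<close> unfolding Hmul_def
    by (cases P) (auto simp: Bmul_outside_box[OF assms])
  ultimately show False
    by (simp add: supp_def BHmul_def sum_fun_apply)
qed

lemma BHone_eq_ind: "BHone = ind ((0, 0), (0, 0))"
  by (simp add: BHone_def Bone_def tens_ind_ind)

lemma BHmul_BHone_left:
  assumes "supp z \<subseteq> box N \<times> box N"
  shows "BHmul N q u a BHone z = z"
proof -
  have "BHmul N q u a BHone z =
      (\<Sum>pr1\<in>{((0, 0), (0, 0))}. \<Sum>pr2\<in>box N \<times> box N.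
        sc (ind ((0, 0), (0, 0)) pr1 * z pr2) (BHmul N q u a (ind pr1) (ind pr2)))"
    unfolding BHone_eq_ind by (rule BHmul_eq_sum[OF supp_ind _ assms]) simp_all
  also have "\<dots> = (\<Sum>pr\<in>box N \<times> box N. sc (z pr) (ind pr))"
    by (auto simp: BHmul_ind_ind Bmul_ind_ind_in_box Hmul_ind_ind_in_box tens_ind_ind
        intro!: sum.cong)
  finally show ?thesis
    using sum_sc_ind_eq[OF assms] by simp
qed

(* The basis vector ((i, j), (s, t)) of B \<otimes> H is v_g^i v_x^j \<otimes> g^s x^t; only the x-degree t
   of the H-factor is compared with that of L. *)
definition leading_term :: "((nat \<times> nat) \<times> (nat \<times> nat) \<Rightarrow> 'a::comm_ring_1) \<Rightarrow>
    (nat \<times> nat) \<times> (nat \<times> nat) \<Rightarrow> bool" where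
  "leading_term W L \<longleftrightarrow> (\<forall>P. snd (snd L) \<le> snd (snd P) \<longrightarrow> W P = ind L P)"

lemma leading_termD: "leading_term W L \<Longrightarrow> snd (snd L) \<le> snd (snd P) \<Longrightarrow> W P = ind L P"
  unfolding leading_term_def by blast

lemma BHmul_ind_ind_apply:
  "BHmul N q u a (ind pr1) (ind pr2) P =
     Bmul N q u a (ind (fst pr1)) (ind (fst pr2)) (fst P) * Hmul N q (ind (snd pr1)) (ind (snd pr2)) (snd P)"
  using BHmul_ind_ind[of N q u a "fst pr1" "snd pr1" "fst pr2" "snd pr2"]
  by (simp add: tens_def split_beta)

lemma leading_term_BHmul_summand:
  fixes W V :: "(nat \<times> nat) \<times> (nat \<times> nat) \<Rightarrow> 'a::comm_ring_1"
  assumes lead: "leading_term W L1" "leading_term V L2"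
    and P: "snd (snd L1) + snd (snd L2) \<le> snd (snd P)"
  shows "W pr1 * V pr2 * BHmul N q u a (ind pr1) (ind pr2) P =
    ind L1 pr1 * ind L2 pr2 * BHmul N q u a (ind pr1) (ind pr2) P"
proof (cases "Hmul N q (ind (snd pr1)) (ind (snd pr2)) (snd P) = 0")
  case False
  then have degP: "snd (snd P) = snd (snd pr1) + snd (snd pr2)"
    by (rule Hmul_ind_ind_nonzero_x_degree)
  show ?thesis
  proof (cases "snd (snd L1) \<le> snd (snd pr1)")
    case True
    then have "W pr1 = ind L1 pr1"
      by (rule leading_termD[OF lead(1)])
    moreover have "V pr2 = ind L2 pr2" if "pr1 = L1"
      using P degP that by (intro leading_termD[OF lead(2)]) simp
    ultimately show ?thesis
      by (cases "pr1 = L1") (simp_all add: ind_apply)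
  next
    case False
    then have "V pr2 = ind L2 pr2"
      using P degP by (intro leading_termD[OF lead(2)]) simp
    moreover have "W pr1 = ind L1 pr1" if "pr2 = L2"
      using P degP that by (intro leading_termD[OF lead(1)]) simp
    ultimately show ?thesis
      by (cases "pr2 = L2") (simp_all add: ind_apply)
  qed
qed (simp add: BHmul_ind_ind_apply)

lemma leading_term_BHmul:
  fixes W V :: "(nat \<times> nat) \<times> (nat \<times> nat) \<Rightarrow> 'a::comm_ring_1"
  assumes fin: "finite (supp W)" "finite (supp V)"
    and lead: "leading_term W L1" "leading_term V L2"
    and prod: "BHmul N q u a (ind L1) (ind L2) = ind L"
    and deg: "snd (snd L) = snd (snd L1) + snd (snd L2)"
  shows "leading_term (BHmul N q u a W V) L"
  unfolding leading_term_def
proof (intro allI impI)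
  fix P :: "(nat \<times> nat) \<times> (nat \<times> nat)"
  assume "snd (snd L) \<le> snd (snd P)"
  then have P: "snd (snd L1) + snd (snd L2) \<le> snd (snd P)"
    by (simp add: deg)
  let ?S1 = "insert L1 (supp W)" and ?S2 = "insert L2 (supp V)"
  let ?M = "\<lambda>pr1 pr2. BHmul N q u a (ind pr1) (ind pr2) P"
  have "BHmul N q u a W V P = (\<Sum>pr1\<in>?S1. \<Sum>pr2\<in>?S2. W pr1 * V pr2 * ?M pr1 pr2)"
    by (subst BHmul_eq_sum[of W ?S1 V ?S2]) (use fin in \<open>auto simp: sum_fun_apply\<close>)
  also have "\<dots> = (\<Sum>pr1\<in>?S1. \<Sum>pr2\<in>?S2. ind L1 pr1 * ind L2 pr2 * ?M pr1 pr2)"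
    by (simp only: leading_term_BHmul_summand[OF lead P])
  also have "\<dots> = BHmul N q u a (ind L1) (ind L2) P"
    by (subst BHmul_eq_sum[of "ind L1" ?S1 "ind L2" ?S2])
       (use fin supp_ind[of L1] supp_ind[of L2] in \<open>auto simp: sum_fun_apply\<close>)
  finally show "BHmul N q u a W V P = ind L P"
    by (simp add: prod)
qed

lemma leading_term_ind: "leading_term (ind L) L"
  by (simp add: leading_term_def)

lemma leading_term_x_degree_0: "leading_term W L \<Longrightarrow> snd (snd L) = 0 \<Longrightarrow> W = ind L"
  by (auto simp: fun_eq_iff intro: leading_termD)

lemma pw_Suc: "pw mul one z (Suc k) = mul (pw mul one z k) z"
  by (simp add: pw_def)

lemma supp_pw_BHmul:
  assumes "0 < N"
  shows "supp (pw (BHmul N q u a) BHone V n) \<subseteq> box N \<times> box N"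
proof (cases n)
  case 0
  then show ?thesis
    using supp_ind[of "((0::nat, 0::nat), (0::nat, 0::nat))"] assms
    by (auto simp: pw_def BHone_eq_ind box_def)
next
  case (Suc k)
  then show ?thesis
    by (simp add: pw_Suc supp_BHmul[OF assms])
qed

lemma finite_supp_pw_BHmul: "0 < N \<Longrightarrow> finite (supp (pw (BHmul N q u a) BHone V n))"
  by (rule finite_subset[OF supp_pw_BHmul]) simp_all

lemma pw_coaction_vg:
  "m < N \<Longrightarrow> pw (BHmul N q u a) BHone (tens Bvg Bvg) m = ind ((m, 0), (m, 0))"
proof (induction m)
  case 0
  then show ?case
    by (simp add: pw_def BHone_eq_ind)
next
  case (Suc m)
  then have "(Suc m, 0) \<in> box N"
    by (simp add: box_def)
  with Suc show ?case
    by (simp add: pw_def Bvg_def tens_ind_ind BHmul_ind_ind Bmul_ind_ind_in_box Hmul_ind_ind_in_box)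
qed

lemma coaction_vx_eq: "tens Bone Bvx + tens Bvx Bvg = ind ((0, 0), (0, 1)) + ind ((0, 1), (1, 0))"
  by (simp add: Bone_def Bvx_def Bvg_def tens_ind_ind)

lemma supp_coaction_vx:
  "supp (ind ((0, 0), (0, 1)) + ind ((0, 1), (1, 0)) :: _ \<Rightarrow> 'a::comm_ring_1) \<subseteq>
     {((0, 0), (0, 1)), ((0, 1), (1, 0))}"
  by (auto simp: supp_def ind_apply split: if_splits)

lemma leading_term_coaction_vx:
  "leading_term (ind ((0, 0), (0, 1)) + ind ((0, 1), (1, 0))) ((0, 0), (0, 1))"
  by (auto simp: leading_term_def ind_apply)

lemma leading_term_pw_coaction_vx:
  assumes "n < N"
  shows "leading_term (pw (BHmul N q u a) BHone (ind ((0, 0), (0, 1)) + ind ((0, 1), (1, 0))) n)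
    ((0, 0), (0, n))"
  using assms
proof (induction n)
  case 0
  then show ?case
    by (simp add: pw_def BHone_eq_ind leading_term_ind)
next
  case (Suc n)
  have "(0, 0) \<in> box N" "(0, Suc n) \<in> box N"
    using Suc.prems by (simp_all add: box_def)
  then have prod: "BHmul N q u a (ind ((0, 0), (0, n))) (ind ((0, 0), (0, 1))) = ind ((0, 0), (0, Suc n))"
    by (simp add: BHmul_ind_ind Bmul_ind_ind_in_box Hmul_ind_ind_in_box tens_ind_ind)
  have fin: "finite (supp (ind ((0, 0), (0, 1)) + ind ((0, 1), (1, 0)) :: _ \<Rightarrow> 'a))"
    by (rule finite_subset[OF supp_coaction_vx]) simp
  have IH: "leading_term (pw (BHmul N q u a) BHone (ind ((0, 0), (0, 1)) + ind ((0, 1), (1, 0))) n)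
      ((0, 0), (0, n))"
    by (rule Suc.IH) (use Suc.prems in simp)
  show ?case
    unfolding pw_Suc
    by (rule leading_term_BHmul[OF finite_supp_pw_BHmul fin IH leading_term_coaction_vx prod])
       (use Suc.prems in simp_all)
qed

lemma leading_term_rho_basis:
  assumes "(m, n) \<in> box N"
  shows "leading_term (rho_basis N q u a (m, n)) ((m, 0), (m, n))"
proof -
  have N: "0 < N" "m < N" "n < N" and box: "(m, 0) \<in> box N"
    using assms by (auto simp: box_def)
  have prod: "BHmul N q u a (ind ((m, 0), (m, 0))) (ind ((0, 0), (0, n))) = ind ((m, 0), (m, n))"
    using assms box by (simp add: BHmul_ind_ind Bmul_ind_ind_in_box Hmul_ind_ind_in_box tens_ind_ind)
  show ?thesis
    unfolding rho_basis_def fst_conv snd_conv pw_coaction_vg[OF N(2)] coaction_vx_eq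
    by (rule leading_term_BHmul[OF finite_subset[OF supp_ind] finite_supp_pw_BHmul[OF N(1)]
          leading_term_ind leading_term_pw_coaction_vx[OF N(3)] prod]) simp_all
qed

lemma rho_basis_vx:
  assumes "1 < N"
  shows "rho_basis N q u a (0, 1) = ind ((0, 0), (0, 1)) + ind ((0, 1), (1, 0))"
proof -
  have "supp (ind ((0, 0), (0, 1)) + ind ((0, 1), (1, 0)) :: _ \<Rightarrow> 'a) \<subseteq> box N \<times> box N"
    using supp_coaction_vx assms by (fastforce simp: box_def)
  then show ?thesis
    by (simp add: rho_basis_def pw_def coaction_vx_eq BHmul_BHone_left)
qed

lemma rho_eq_sum:
  assumes "y \<in> carrB N"
  shows "rho N q u a y = (\<Sum>p\<in>box N. sc (y p) (rho_basis N q u a p))"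
  unfolding rho_def by (rule sum_supp_superset) (use assms in \<open>auto simp: carrB_def\<close>)

lemma rho_ind: "rho N q u a (ind p) = rho_basis N q u a p"
  unfolding rho_def by (subst sum_supp_superset[OF supp_ind]) simp_all

lemma carrB_diff_sc:
  fixes y z :: "nat \<times> nat \<Rightarrow> 'a::comm_ring_1"
  assumes "y \<in> carrB N" "z \<in> carrB N"
  shows "y - sc c z \<in> carrB N"
proof -
  have "y v = 0" "z v = 0" if "v \<notin> box N" for v
    using assms that unfolding carrB_def supp_def by blast+
  then have "(y - sc c z) v = 0" if "v \<notin> box N" for v
    using that by simp
  then show ?thesis
    by (auto simp: carrB_def supp_def)
qed

lemma rho_diff_sc:
  assumes "y \<in> carrB N" "z \<in> carrB N"
  shows "rho N q u a (y - sc c z) = rho N q u a y - sc c (rho N q u a z)"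
  by (simp add: rho_eq_sum assms carrB_diff_sc fun_eq_iff sum_fun_apply algebra_simps
      sum_subtractf sum_distrib_left)

lemma rho_top_coeff:
  assumes y: "y \<in> carrB N" and mn: "(m, n) \<in> box N"
    and above: "\<And>m' n'. n < n' \<Longrightarrow> y (m', n') = 0"
  shows "rho N q u a y ((m, 0), (m, n)) = y (m, n)"
proof -
  have "y p * rho_basis N q u a p ((m, 0), (m, n)) = y p * ind (m, n) p" if "p \<in> box N" for p
  proof -
    obtain m' n' where p: "p = (m', n')"
      by fastforce
    show ?thesis
    proof (cases "n < n'")
      case True
      then show ?thesis
        using above p by simp
    next
      case False
      have "rho_basis N q u a (m', n') ((m, 0), (m, n)) = ind ((m', 0::nat), (m', n')) ((m, 0), (m, n))"
        by (rule leading_termD[OF leading_term_rho_basis]) (use that p False in simp_all)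
      then show ?thesis
        using p by (simp add: ind_apply)
    qed
  qed
  then have "rho N q u a y ((m, 0), (m, n)) = (\<Sum>p\<in>box N. y p * ind (m, n) p)"
    unfolding rho_eq_sum[OF y] sum_fun_apply by (auto intro: sum.cong)
  also have "\<dots> = (\<Sum>p\<in>box N. if p = (m, n) then y (m, n) else 0)"
    by (intro sum.cong) (auto simp: ind_apply)
  also have "\<dots> = y (m, n)"
    using mn by simp
  finally show ?thesis .
qed

lemma rho_eq_tens_grouplike_imp_scalar:
  assumes y: "y \<in> carrB N" and coinv: "rho N q u a y = tens y (ind (k, 0))"
  shows "y = sc (y (k, 0)) (ind (k, 0))"
proof -
  have outside: "y p = 0" if "p \<notin> box N" for p
    using y that by (auto simp: carrB_def supp_def)
  \<comment> \<open>descending induction on n, since \<open>rho_top_coeff\<close> needs all higher x-degrees to vanish\<close>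
  have positive_degree: "y (m, n) = 0" if "0 < n" for m n
    using that
  proof (induction "N - n" arbitrary: m n rule: less_induct)
    case less
    show ?case
    proof (cases "(m, n) \<in> box N")
      case True
      have "y (m', n') = 0" if "n < n'" for m' n'
        using less True that by (intro less.hyps) (auto simp: box_def)
      then have "y (m, n) = rho N q u a y ((m, 0), (m, n))"
        using rho_top_coeff[OF y True] by simp
      also have "\<dots> = 0"
        using less.prems by (simp add: coinv ind_apply)
      finally show ?thesis .
    qed (rule outside)
  qed
  have degree_0: "y (m, 0) = 0" if "m \<noteq> k" for m
  proof (cases "(m, 0) \<in> box N")
    case True
    then have "y (m, 0) = rho N q u a y ((m, 0), (m, 0))"
      using rho_top_coeff[OF y True] positive_degree by simp
    also have "\<dots> = 0"
      using that by (simp add: coinv ind_apply)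
    finally show ?thesis .
  qed (rule outside)
  show ?thesis
  proof
    fix p :: "nat \<times> nat"
    obtain i j where p: "p = (i, j)"
      by fastforce
    show "y p = sc (y (k, 0)) (ind (k, 0)) p"
      using positive_degree[of j i] degree_0[of i] p by (cases "j = 0"; cases "i = k") (simp_all add: ind_apply)
  qed
qed

lemma Z_ind:
  assumes "p \<in> box N"
  shows "Z N i (ind p) = ind [(i, p)]"
proof -
  have "Z N i (ind p) = (\<Sum>p'\<in>box N. if p' = p then ind [(i, p)] else 0)"
    unfolding Z_def by (intro sum.cong) (auto simp: ind_apply)
  then show ?thesis
    using assms by simp
qed

lemma ind_letter_in_carrT: "1 \<le> i \<Longrightarrow> p \<in> box N \<Longrightarrow> ind [(i, p)] \<in> carrT N"
  using supp_ind[of "[(i, p)]"] by (auto simp: carrT_def intro: finite_subset)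

lemma THmul_THone_right:
  assumes "supp z \<subseteq> S" "finite S" "snd ` S \<subseteq> box N"
  shows "THmul N q z THone = z"
proof -
  have THone_eq: "THone = ind ([], (0, 0))"
    by (simp add: THone_def Tone_def Bone_def tens_ind_ind)
  have "THmul N q z THone = (\<Sum>wr\<in>S. \<Sum>wr'\<in>{([], (0, 0))}. sc (z wr * ind ([], (0, 0)) wr')
      (tens (ind (fst wr @ fst wr')) (Hmul N q (ind (snd wr)) (ind (snd wr')))))"
    unfolding THmul_def THone_eq
    by (subst sum_supp_superset[OF assms(1,2)], simp)
       (intro sum.cong refl sum_supp_superset[OF supp_ind], simp_all)
  also have "\<dots> = (\<Sum>wr\<in>S. sc (z wr) (ind wr))"
    using assms(3) by (auto simp: Hmul_ind_ind_in_box tens_ind_ind box_def intro!: sum.cong)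
  also have "\<dots> = z"
    using assms(1,2) by (rule sum_sc_ind_eq)
  finally show ?thesis .
qed

lemma delta_letter_eq_sum:
  assumes "supp (Delta N q (ind p)) \<subseteq> S" "finite S"
  shows "delta_letter N q (i, p) = (\<Sum>rs\<in>S. sc (Delta N q (ind p) rs) (ind ([(i, fst rs)], snd rs)))"
  unfolding delta_letter_def by (simp add: sum_supp_superset[OF assms] tens_ind_ind)

lemma delta_ind_letter:
  assumes "supp (Delta N q (ind p)) \<subseteq> S" "finite S" "snd ` S \<subseteq> box N"
  shows "delta N q (ind [(i, p)]) = delta_letter N q (i, p)"
proof -
  have "delta N q (ind [(i, p)]) = THmul N q (delta_letter N q (i, p)) THone"
    unfolding delta_def by (subst sum_supp_superset[OF supp_ind]) (simp_all add: delta_word_def)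
  also have "\<dots> = delta_letter N q (i, p)"
    unfolding delta_letter_eq_sum[OF assms(1,2)]
    by (rule THmul_THone_right[OF supp_sum_sc_ind]) (use assms(2,3) in auto)
  finally show ?thesis .
qed

lemma ftens_sum_sc_ind:
  assumes "finite K"
  shows "ftens f (\<Sum>k\<in>K. sc (c k) (ind (w k))) =
    (\<Sum>k\<in>K. sc (c k) (tens (f (ind (fst (w k)))) (ind (snd (w k)))))"
proof -
  let ?z = "\<Sum>k\<in>K. sc (c k) (ind (w k))"
  let ?T = "\<lambda>wr. tens (f (ind (fst wr))) (ind (snd wr))"
  have "ftens f ?z = (\<Sum>wr\<in>w ` K. sc (?z wr) (?T wr))"
    unfolding ftens_def by (rule sum_supp_superset[OF supp_sum_sc_ind]) (use assms in simp_all)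
  also have "\<dots> = (\<Sum>k\<in>K. \<Sum>wr\<in>w ` K. sc (c k * ind (w k) wr) (?T wr))"
    by (simp add: sum_fun_apply sc_sum_left sum.swap[of _ K])
  also have "\<dots> = (\<Sum>k\<in>K. \<Sum>wr\<in>w ` K. if wr = w k then sc (c k) (?T (w k)) else 0)"
    by (intro sum.cong refl) (simp add: ind_apply)
  also have "\<dots> = (\<Sum>k\<in>K. sc (c k) (?T (w k)))"
    using assms by (simp add: sum.delta')
  finally show ?thesis .
qed

lemma comod_alg_map_rho_letter:
  assumes f: "comod_alg_map N q u a f" and p: "p \<in> box N"
    and S: "supp (Delta N q (ind p)) \<subseteq> S" "finite S" "snd ` S \<subseteq> box N"
  shows "rho N q u a (f (ind [(1, p)])) =
    (\<Sum>rs\<in>S. sc (Delta N q (ind p) rs) (tens (f (ind [(1, fst rs)])) (ind (snd rs))))"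
proof -
  have "ind [(1, p)] \<in> carrT N"
    using p by (intro ind_letter_in_carrT) simp_all
  then have "rho N q u a (f (ind [(1, p)])) = ftens f (delta N q (ind [(1, p)]))"
    using f unfolding comod_alg_map_def by blast
  then show ?thesis
    by (simp add: delta_ind_letter[OF S] delta_letter_eq_sum[OF S(1,2)] ftens_sum_sc_ind[OF S(2)])
qed

lemma comod_alg_map_rho_generators:
  assumes f: "comod_alg_map N q u a f" and N: "1 < N"
  shows "rho N q u a (f (ind [(1, (0, 0))])) = tens (f (ind [(1, (0, 0))])) (ind (0, 0))"
    and "rho N q u a (f (ind [(1, (1, 0))])) = tens (f (ind [(1, (1, 0))])) (ind (1, 0))"
    and "rho N q u a (f (ind [(1, (0, 1))])) =
      tens (f (ind [(1, (0, 0))])) (ind (0, 1)) + tens (f (ind [(1, (0, 1))])) (ind (1, 0))"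
proof -
  have box: "(0, 0) \<in> box N" "(1, 0) \<in> box N" "(0, 1) \<in> box N"
    using N by (auto simp: box_def)
  have grouplike: "rho N q u a (f (ind [(1, (m, 0))])) = tens (f (ind [(1, (m, 0))])) (ind (m, 0))"
    if m: "(m, 0) \<in> box N" for m
  proof -
    have Delta: "Delta N q (ind (m, 0)) = ind ((m, 0), (m, 0))"
      unfolding Delta_def rho_ind using m by (intro leading_term_x_degree_0 leading_term_rho_basis) simp_all
    have "rho N q u a (f (ind [(1, (m, 0))])) = (\<Sum>rs\<in>{((m, 0), (m, 0))}.
        sc (Delta N q (ind (m, 0)) rs) (tens (f (ind [(1, fst rs)])) (ind (snd rs))))"
      by (rule comod_alg_map_rho_letter[OF f m]) (use m in \<open>simp_all add: Delta supp_ind\<close>)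
    then show ?thesis
      by (simp add: Delta)
  qed
  show "rho N q u a (f (ind [(1, (0, 0))])) = tens (f (ind [(1, (0, 0))])) (ind (0, 0))"
    using box(1) by (rule grouplike)
  show "rho N q u a (f (ind [(1, (1, 0))])) = tens (f (ind [(1, (1, 0))])) (ind (1, 0))"
    using box(2) by (rule grouplike)
  have Delta_vx: "Delta N q (ind (0, 1)) = ind ((0, 0), (0, 1)) + ind ((0, 1), (1, 0))"
    unfolding Delta_def rho_ind using N by (rule rho_basis_vx)
  have "rho N q u a (f (ind [(1, (0, 1))])) = (\<Sum>rs\<in>{((0, 0), (0, 1)), ((0, 1), (1, 0))}.
      sc (Delta N q (ind (0, 1)) rs) (tens (f (ind [(1, fst rs)])) (ind (snd rs))))"
    by (rule comod_alg_map_rho_letter[OF f box(3)])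
       (simp only: Delta_vx supp_coaction_vx, simp, use box in auto)
  then show "rho N q u a (f (ind [(1, (0, 1))])) =
      tens (f (ind [(1, (0, 0))])) (ind (0, 1)) + tens (f (ind [(1, (0, 1))])) (ind (1, 0))"
    unfolding Delta_vx by (simp add: ind_apply)
qed

lemma rho_eq_coaction_vx_imp_decomp:
  assumes N: "1 < N" and x: "x \<in> carrB N"
    and coact: "rho N q u a x = tens (sc lam Bone) (ind (0, 1)) + tens x (ind (1, 0))"
  shows "x = sc lam Bvx + sc (x (1, 0)) Bvg"
proof -
  define y where "y = x - sc lam Bvx"
  have Bvx: "Bvx \<in> carrB N"
    using N supp_ind[of "(0::nat, 1::nat)"] by (auto simp: carrB_def Bvx_def box_def)
  have y: "y \<in> carrB N"
    unfolding y_def using x Bvx by (rule carrB_diff_sc)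
  have rho_Bvx: "rho N q u a Bvx = ind ((0, 0), (0, 1)) + ind ((0, 1), (1, 0))"
    by (simp only: Bvx_def rho_ind rho_basis_vx[OF N])
  have "rho N q u a y = tens y (ind (1, 0))"
    unfolding y_def rho_diff_sc[OF x Bvx] coact rho_Bvx
    by (simp add: tens_diff_left tens_sc_left sc_add_right Bone_def Bvx_def tens_ind_ind)
  then have "y = sc (y (1, 0)) (ind (1, 0))"
    by (rule rho_eq_tens_grouplike_imp_scalar[OF y])
  moreover have "y (1, 0) = x (1, 0)"
    by (simp add: y_def Bvx_def ind_apply)
  ultimately have "y = sc (x (1, 0)) Bvg"
    by (simp add: Bvg_def)
  moreover have "x = sc lam Bvx + y"
    by (simp add: y_def)
  ultimately show ?thesis
    by simp
qed

theorem proposition2p2: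
  fixes N :: nat and q u a :: "'a::comm_ring_1"
    and f :: "(letter list \<Rightarrow> 'a) \<Rightarrow> (nat \<times> nat \<Rightarrow> 'a)"
  assumes "N \<ge> 2"
    and "poly (map_poly of_int (cyclotomic_poly N)) q = 0"
    and "u dvd 1"
    and "comod_alg_map N q u a f"
  shows "\<exists>!(lam, mu, xi). f (Z N 1 Bone) = sc lam Bone \<and> f (Z N 1 Bvg) = sc mu Bvg \<and>
           f (Z N 1 Bvx) = sc lam Bvx + sc xi Bvg"
proof -
  have N: "1 < N" and box: "(0, 0) \<in> box N" "(1, 0) \<in> box N" "(0, 1) \<in> box N"
    using assms(1) by (auto simp: box_def)
  define e g x where "e = f (ind [(1, (0, 0))])" and "g = f (ind [(1, (1, 0))])"
    and "x = f (ind [(1, (0, 1))])"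
  have Z: "Z N 1 Bone = ind [(1, (0, 0))]" "Z N 1 Bvg = ind [(1, (1, 0))]" "Z N 1 Bvx = ind [(1, (0, 1))]"
    using box by (simp_all add: Bone_def Bvg_def Bvx_def Z_ind)
  have in_carrB: "e \<in> carrB N" "g \<in> carrB N" "x \<in> carrB N"
    using assms(4) box ind_letter_in_carrT[of 1 _ N]
    unfolding e_def g_def x_def comod_alg_map_def by auto
  note rho_gens = comod_alg_map_rho_generators[OF assms(4) N, folded e_def g_def x_def]
  have e: "e = sc (e (0, 0)) Bone"
    unfolding Bone_def by (rule rho_eq_tens_grouplike_imp_scalar[OF in_carrB(1) rho_gens(1)])
  have g: "g = sc (g (1, 0)) Bvg"
    unfolding Bvg_def by (rule rho_eq_tens_grouplike_imp_scalar[OF in_carrB(2) rho_gens(2)])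
  have x: "x = sc (e (0, 0)) Bvx + sc (x (1, 0)) Bvg"
    using rho_gens(3) e by (intro rho_eq_coaction_vx_imp_decomp[OF N in_carrB(3)]) simp
  show ?thesis
    unfolding Z e_def[symmetric] g_def[symmetric] x_def[symmetric]
  proof (rule ex1I[of _ "(e (0, 0), g (1, 0), x (1, 0))"])
    fix t :: "'a \<times> 'a \<times> 'a"
    assume "case t of (lam, mu, xi) \<Rightarrow> e = sc lam Bone \<and> g = sc mu Bvg \<and> x = sc lam Bvx + sc xi Bvg"
    then show "t = (e (0, 0), g (1, 0), x (1, 0))"
      by (auto simp: Bone_def Bvg_def Bvx_def ind_apply split: prod.splits)
  qed (use e g x in auto)
qed

end
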